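(* Let $\pi_\theta$ be a parametrized policy with $\pi_\theta(a\mid s)>0$ differentiable in $\theta$ for all $(s,a)$, and let $P_\nu$ be an encoding matrix of full row rank. Define $P_U^{\theta}=P_\nu P_{\mathcal{S}}^{\pi_\theta}P_\nu^{\dagger}$, assume the spectral radius of $\gamma P_U^{\theta}$ is less than $1$, and define the abstract value function $V_U^{\theta}=(I-\gamma P_U^{\theta})^{-1}P_\nu R_{\mathcal{S}}^{\pi_\theta}$. Let $\eta(x\mid u)=\sum_{t=0}^{\infty}\gamma^t\big((P_U^{\theta})^t\big)_{u,x}$ for $u,x\in U$ and $P_1(u'\mid s,a)=\sum_{s'\in\mathcal{S}}P_{\mathcal{S}\mathcal{A}}(s'\mid s,a)\,P_\nu^{\dagger}(s',u')$. Then for every $u\in U$, $$\nabla_\theta V_U^{\theta}(u)=\sum_{x\in U}\eta(x\mid u)\sum_{s\in\mathcal{S}}\nu(s\mid x)\sum_{a\in\mathcal{A}}\pi_\theta(a\mid s)\,\nabla_\theta\ln\pi_\theta(a\mid s)\Big[r(s,a)+\gamma\sum_{u'\in U}P_1(u'\mid s,a)\,V_U^{\theta}(u')\Big].$$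
   Context: Ground MDP with finite $\mathcal{S},\mathcal{A}$, transition probabilities $P_{\mathcal{S}\mathcal{A}}(s'\mid s,a)$, reward $r$, discount $\gamma\in(0,1)$. $P_{\mathcal{S}}^{\pi}(s,s')=\sum_a\pi(a\mid s)P_{\mathcal{S}\mathcal{A}}(s'\mid s,a)$, $R_{\mathcal{S}}^{\pi}(s)=\sum_a\pi(a\mid s)r(s,a)$. The encoding matrix $P_\nu\in\mathbb{R}^{|U|\times|\mathcal{S}|}$ has $(u,s)$ entry $\nu(s\mid u)$, each row a probability distribution on $\mathcal{S}$, $U$ a finite abstract state set. $P_\nu^{\dagger}=P_\nu^\top(P_\nu P_\nu^\top)^{-1}\in\mathbb{R}^{|\mathcal{S}|\times|U|}$, and $P_\nu^{\dagger}(s',u')$ denotes its $(s',u')$ entry. *)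

theory Defs
  imports "HOL-Analysis.Analysis"
begin

text \<open>Matrices are HOL-Analysis matrices: A :: real^'c^'r has entry A$i$j (row i, column j).\<close>

definition matpow :: "real^'n^'n \<Rightarrow> nat \<Rightarrow> real^'n^'n" where
  "matpow A t = (((**) A) ^^ t) (mat 1)"

definition spectral_radius :: "real^'n^'n \<Rightarrow> real" where
  "spectral_radius A =
     Max {cmod l | l. \<exists>v::complex^'n. v \<noteq> 0 \<and>
            (\<chi> i j. complex_of_real (A$i$j)) *v v = l *s v}"

definition pinv :: "real^'s^'u \<Rightarrow> real^'u^'s" where
  "pinv M = transpose M ** matrix_inv (M ** transpose M)"

definition PS :: "('s::finite \<Rightarrow> 'a::finite \<Rightarrow> 's \<Rightarrow> real) \<Rightarrow> ('s \<Rightarrow> 'a \<Rightarrow> real) \<Rightarrow> real^'s^'s" where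
  "PS P pol = (\<chi> s s'. \<Sum>a\<in>UNIV. pol s a * P s a s')"

definition RS :: "('s::finite \<Rightarrow> 'a::finite \<Rightarrow> real) \<Rightarrow> ('s \<Rightarrow> 'a \<Rightarrow> real) \<Rightarrow> real^'s" where
  "RS r pol = (\<chi> s. \<Sum>a\<in>UNIV. pol s a * r s a)"

definition PU :: "real^'s::finite^'u::finite \<Rightarrow> ('s \<Rightarrow> 'a::finite \<Rightarrow> 's \<Rightarrow> real) \<Rightarrow> ('s \<Rightarrow> 'a \<Rightarrow> real) \<Rightarrow> real^'u^'u" where
  "PU Pnu P pol = Pnu ** PS P pol ** pinv Pnu"

definition VU :: "real \<Rightarrow> real^'s::finite^'u::finite \<Rightarrow> ('s \<Rightarrow> 'a::finite \<Rightarrow> 's \<Rightarrow> real) \<Rightarrow> ('s \<Rightarrow> 'a \<Rightarrow> real)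
                   \<Rightarrow> ('s \<Rightarrow> 'a \<Rightarrow> real) \<Rightarrow> real^'u" where
  "VU \<gamma> Pnu P r pol = matrix_inv (mat 1 - \<gamma> *\<^sub>R PU Pnu P pol) *v (Pnu *v RS r pol)"

definition eta :: "real \<Rightarrow> real^'u^'u \<Rightarrow> 'u \<Rightarrow> 'u \<Rightarrow> real" where
  "eta \<gamma> A x u = (\<Sum>t. \<gamma>^t * (matpow A t)$u$x)"

definition P1 :: "real^'s::finite^'u::finite \<Rightarrow> ('s \<Rightarrow> 'a \<Rightarrow> 's \<Rightarrow> real) \<Rightarrow> 'u \<Rightarrow> 's \<Rightarrow> 'a \<Rightarrow> real" where
  "P1 Pnu P u' s a = (\<Sum>s'\<in>UNIV. P s a s' * (pinv Pnu)$s'$u')"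

end

(* V_U(theta) solves the Bellman system (I - gamma P_U(theta)) V = P_nu R_S(theta).
   If a matrix B has spectral radius rho < 1, then for rho < q < 1 the powers of B/q are bounded
   (Jordan normal form), so the entries of B^t decay like q^t and the Neumann series sum_t B^t
   converges to (I - B)^-1; for B = gamma P_U this identifies eta(x|u) with the (u,x) entry of the
   resolvent.  By Cramer's rule the solution of the Bellman system is differentiable in theta, and
   differentiating the system gives
     grad V = (I - gamma P_U)^-1 (grad (P_nu R_S) + gamma (grad P_U) V).
   Both P_nu R_S and P_U are nu-pi averages, so their gradients replace pi by
   grad pi = pi grad ln pi, which is the stated formula. *)

theory Submission
  imports Defs "Jordan_Normal_Form.Spectral_Radius"
begin

no_notation Matrix.vec_index (infixl "$" 100)
hide_const (open) Matrix.mat Matrix.vec Determinant.det Spectral_Radius.spectral_radius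

lemma matpow_0 [simp]: "matpow A 0 = mat 1"
  by (simp add: matpow_def)

lemma matpow_Suc: "matpow A (Suc k) = A ** matpow A k"
  by (simp add: matpow_def)

lemma matpow_Suc_right: "matpow A (Suc k) = matpow A k ** A"
  by (induction k) (simp_all add: matpow_Suc matrix_mul_assoc)

lemma matpow_scaleR: "matpow (c *\<^sub>R A) k = c ^ k *\<^sub>R matpow (A :: real^'n::finite^'n) k"
  by (induction k) (simp_all add: matpow_Suc matrix_scalar_ac scalar_matrix_assoc[symmetric])

definition enum_idx :: "nat \<Rightarrow> 'n::finite" where
  "enum_idx = (SOME h. bij_betw h {0..<CARD('n)} UNIV)"

lemma bij_betw_enum_idx: "bij_betw (enum_idx :: nat \<Rightarrow> 'n::finite) {0..<CARD('n)} UNIV"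
  unfolding enum_idx_def by (rule someI_ex[OF ex_bij_betw_nat_finite]) simp

lemma enum_idx_eq_iff:
  "i < CARD('n) \<Longrightarrow> j < CARD('n) \<Longrightarrow> (enum_idx i :: 'n::finite) = enum_idx j \<longleftrightarrow> i = j"
  using bij_betw_enum_idx[where 'n = 'n] unfolding bij_betw_def inj_on_def by auto

lemma enum_idx_surj: obtains i where "i < CARD('n)" "enum_idx i = (u :: 'n::finite)"
  using bij_betw_enum_idx[where 'n = 'n] unfolding bij_betw_def
  by (metis UNIV_I atLeastLessThan_iff imageE)

lemma sum_enum_idx: "(\<Sum>k<CARD('n). f (enum_idx k)) = (\<Sum>u\<in>UNIV. f (u :: 'n::finite))"
  using sum.reindex_bij_betw[OF bij_betw_enum_idx[where 'n = 'n], of f] by (simp add: atLeast0LessThan)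

definition to_cmat :: "real^'n^'n \<Rightarrow> complex mat" where
  "to_cmat X = Matrix.mat CARD('n) CARD('n) (\<lambda>(i, j). complex_of_real (X $ enum_idx i $ enum_idx j))"

definition to_cvec :: "complex^'n \<Rightarrow> complex Matrix.vec" where
  "to_cvec w = Matrix.vec CARD('n) (\<lambda>i. w $ enum_idx i)"

definition of_real_matrix :: "real^'m^'n \<Rightarrow> complex^'m^'n" where
  "of_real_matrix X = (\<chi> i j. complex_of_real (X $ i $ j))"

lemma to_cmat_carrier: "to_cmat (X :: real^'n::finite^'n) \<in> carrier_mat CARD('n) CARD('n)"
  by (simp add: to_cmat_def)

lemma dim_to_cmat [simp]:
  "dim_row (to_cmat (X :: real^'n::finite^'n)) = CARD('n)" "dim_col (to_cmat X) = CARD('n)"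
  by (simp_all add: to_cmat_def)

lemma to_cmat_mult: "to_cmat (X ** Y) = to_cmat X * to_cmat (Y :: real^'n::finite^'n)"
proof (rule eq_matI)
  fix i j assume "i < dim_row (to_cmat X * to_cmat Y)" "j < dim_col (to_cmat X * to_cmat Y)"
  then have "i < CARD('n)" "j < CARD('n)" by (auto simp: to_cmat_def)
  then show "to_cmat (X ** Y) $$ (i, j) = (to_cmat X * to_cmat Y) $$ (i, j)"
    using sum_enum_idx[of "\<lambda>k. complex_of_real (X $ enum_idx i $ k * Y $ k $ enum_idx j)"]
    by (simp add: to_cmat_def matrix_matrix_mult_def scalar_prod_def atLeast0LessThan)
qed (auto simp: to_cmat_def)

lemma to_cmat_one: "to_cmat (mat 1 :: real^'n::finite^'n) = 1\<^sub>m CARD('n)"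
  by (rule eq_matI) (auto simp: to_cmat_def Finite_Cartesian_Product.mat_def enum_idx_eq_iff)

lemma to_cmat_matpow: "to_cmat (matpow X k) = to_cmat (X :: real^'n::finite^'n) ^\<^sub>m k"
  by (induction k) (simp_all add: to_cmat_one matpow_Suc_right to_cmat_mult)

lemma to_cvec_carrier: "to_cvec (w :: complex^'n::finite) \<in> carrier_vec CARD('n)"
  by (simp add: to_cvec_def)

lemma to_cvec_inject: "to_cvec v = to_cvec w \<longleftrightarrow> v = (w :: complex^'n::finite)"
proof
  assume eq: "to_cvec v = to_cvec w"
  show "v = w"
  proof (subst Finite_Cartesian_Product.vec_eq_iff, intro allI)
    fix u :: 'n
    obtain i where "i < CARD('n)" "enum_idx i = u" by (rule enum_idx_surj)
    then show "v $ u = w $ u"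
      using arg_cong[OF eq, of "\<lambda>x. Matrix.vec_index x i"] by (simp add: to_cvec_def)
  qed
qed simp

lemma carrier_vec_to_cvec:
  assumes "v \<in> carrier_vec CARD('n::finite)"
  obtains w :: "complex^'n" where "v = to_cvec w"
proof
  define pos where "pos = inv_into {0..<CARD('n)} (enum_idx :: nat \<Rightarrow> 'n)"
  have pos: "pos (enum_idx i) = i" if "i < CARD('n)" for i
    using bij_betw_enum_idx[where 'n = 'n] that unfolding pos_def bij_betw_def
    by (metis inv_into_f_f atLeastLessThan_iff zero_le)
  show "v = to_cvec (\<chi> u. Matrix.vec_index v (pos u))"
    by (rule eq_vecI) (use assms pos in \<open>simp_all add: to_cvec_def\<close>)
qed

lemma to_cmat_mult_to_cvec: "to_cmat X *\<^sub>v to_cvec w = to_cvec (of_real_matrix X *v w)"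
proof (rule eq_vecI)
  fix i assume "i < dim_vec (to_cvec (of_real_matrix X *v w))"
  then show "Matrix.vec_index (to_cmat X *\<^sub>v to_cvec w) i =
      Matrix.vec_index (to_cvec (of_real_matrix X *v w)) i"
    using sum_enum_idx[of "\<lambda>k. complex_of_real (X $ enum_idx i $ k) * w $ k"]
    by (simp add: to_cmat_def to_cvec_def of_real_matrix_def matrix_vector_mult_def scalar_prod_def
        atLeast0LessThan)
qed (simp add: to_cmat_def to_cvec_def)

lemma eigenvalue_to_cmat_iff:
  "eigenvalue (to_cmat X) l \<longleftrightarrow> (\<exists>w. w \<noteq> 0 \<and> of_real_matrix (X :: real^'n::finite^'n) *v w = l *s w)"
proof -
  have zero: "0\<^sub>v CARD('n) = to_cvec (0 :: complex^'n)" and smult: "l \<cdot>\<^sub>v to_cvec w = to_cvec (l *s w)"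
    for w :: "complex^'n"
    by (auto simp: to_cvec_def)
  have "eigenvalue (to_cmat X) l \<longleftrightarrow>
      (\<exists>w :: complex^'n. to_cvec w \<noteq> 0\<^sub>v CARD('n) \<and> to_cmat X *\<^sub>v to_cvec w = l \<cdot>\<^sub>v to_cvec w)"
  proof
    assume "eigenvalue (to_cmat X) l"
    then obtain v where v: "v \<in> carrier_vec CARD('n)" "v \<noteq> 0\<^sub>v CARD('n)" "to_cmat X *\<^sub>v v = l \<cdot>\<^sub>v v"
      unfolding eigenvalue_def eigenvector_def by auto
    from v(1) obtain w :: "complex^'n" where "v = to_cvec w" by (rule carrier_vec_to_cvec)
    with v show "\<exists>w :: complex^'n. to_cvec w \<noteq> 0\<^sub>v CARD('n) \<and> to_cmat X *\<^sub>v to_cvec w = l \<cdot>\<^sub>v to_cvec w"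
      by blast
  qed (auto simp: eigenvalue_def eigenvector_def intro: to_cvec_carrier)
  then show ?thesis
    by (simp add: zero smult to_cmat_mult_to_cvec to_cvec_inject)
qed

lemma spectrum_to_cmat:
  "spectrum (to_cmat X) = {l. \<exists>w. w \<noteq> 0 \<and> of_real_matrix (X :: real^'n::finite^'n) *v w = l *s w}"
  by (simp add: spectrum_def set_eq_iff eigenvalue_to_cmat_iff)

lemma spectral_radius_to_cmat:
  "spectral_radius X = Spectral_Radius.spectral_radius (to_cmat (X :: real^'n::finite^'n))"
  unfolding Defs.spectral_radius_def Spectral_Radius.spectral_radius_def spectrum_to_cmat
  by (simp add: of_real_matrix_def setcompr_eq_image)

lemma spectral_radius_less_iff:
  "spectral_radius (X :: real^'n::finite^'n) < c \<longleftrightarrow>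
     (\<forall>l w. w \<noteq> 0 \<longrightarrow> of_real_matrix X *v w = l *s w \<longrightarrow> cmod l < c)"
proof -
  have "finite (spectrum (to_cmat X))" "spectrum (to_cmat X) \<noteq> {}"
    using card_finite_spectrum(1) spectrum_non_empty[OF to_cmat_carrier[of X]] to_cmat_carrier
    by auto
  then show ?thesis
    by (auto simp: spectral_radius_to_cmat Spectral_Radius.spectral_radius_def spectrum_to_cmat)
qed

lemma matpow_bounded:
  assumes "spectral_radius (X :: real^'n::finite^'n) < 1"
  obtains c where "\<And>k i j. \<bar>matpow X k $ i $ j\<bar> \<le> c"
proof -
  obtain c where c: "\<And>k. norm_bound (to_cmat X ^\<^sub>m k) c"
    using spectral_radius_jnf_norm_bound_less_1_upper_triangular[OF to_cmat_carrier] assms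
    by (metis spectral_radius_to_cmat)
  have "\<bar>matpow X k $ i $ j\<bar> \<le> c" for k i j
  proof -
    obtain i' j' where "i' < CARD('n)" "enum_idx i' = i" "j' < CARD('n)" "enum_idx j' = j"
      by (metis enum_idx_surj)
    then show ?thesis
      using c[of k] unfolding norm_bound_def to_cmat_matpow[symmetric] by (auto simp: to_cmat_def)
  qed
  then show thesis by (rule that)
qed

lemma of_real_matrix_scaleR_mult:
  "of_real_matrix (c *\<^sub>R X) *v w = complex_of_real c *s (of_real_matrix X *v w)"
  by (simp add: of_real_matrix_def matrix_vector_mult_def Finite_Cartesian_Product.vec_eq_iff
      sum_distrib_left mult_ac)

lemma matpow_geometric_bound:
  assumes "spectral_radius (X :: real^'n::finite^'n) < 1"
  obtains c q where "\<And>k i j. \<bar>matpow X k $ i $ j\<bar> \<le> c * q ^ k" "0 < q" "q < 1"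
proof -
  define q where "q = max (1/2) ((1 + spectral_radius X) / 2)"
  have q: "0 < q" "q < 1" "spectral_radius X < q"
    using assms by (auto simp: q_def max_def)
  have sr: "spectral_radius ((1/q) *\<^sub>R X) < 1"
    unfolding spectral_radius_less_iff
  proof (intro allI impI)
    fix l w assume w: "w \<noteq> 0" and eig: "of_real_matrix ((1/q) *\<^sub>R X) *v w = l *s w"
    have "of_real_matrix X *v w = complex_of_real q *s (of_real_matrix ((1/q) *\<^sub>R X) *v w)"
      using q(1) by (simp add: of_real_matrix_scaleR_mult vector_smult_assoc)
    then have "of_real_matrix X *v w = (complex_of_real q * l) *s w"
      by (simp add: eig vector_smult_assoc)
    then have "cmod (complex_of_real q * l) < q"
      using q(3) w spectral_radius_less_iff by blast
    then show "cmod l < 1"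
      using q(1) by (simp add: norm_mult)
  qed
  obtain c where c: "\<And>k i j. \<bar>matpow ((1/q) *\<^sub>R X) k $ i $ j\<bar> \<le> c"
    using matpow_bounded[OF sr] by blast
  have bound: "\<bar>matpow X k $ i $ j\<bar> \<le> c * q ^ k" for k i j
    using c[of k i j] q(1) by (simp add: matpow_scaleR abs_mult power_one_over divide_le_eq mult.commute)
  from bound q(1,2) show thesis by (rule that)
qed

lemma matrix_inv_unique:
  fixes A B :: "'a::field^'n::finite^'n"
  assumes "A ** B = mat 1"
  shows "matrix_inv A = B"
  unfolding matrix_inv_def
proof (rule some_equality)
  show "A ** B = mat 1 \<and> B ** A = mat 1"
    using assms matrix_left_right_inverse by blast
  fix C assume "A ** C = mat 1 \<and> C ** A = mat 1"
  then show "C = B"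
    using assms by (metis matrix_mul_assoc matrix_mul_lid matrix_mul_rid)
qed

lemma matrix_inv_right: "invertible A \<Longrightarrow> A ** matrix_inv A = mat 1"
  and matrix_inv_left: "invertible A \<Longrightarrow> matrix_inv A ** A = mat 1"
  unfolding invertible_def matrix_inv_def by (metis (mono_tags, lifting) someI_ex)+

lemma matrix_diff_rdistrib:
  fixes A B :: "'a::ring_1^'m::finite^'k" and C :: "'a^'n^'m"
  shows "(A - B) ** C = A ** C - B ** C"
  by (simp add: matrix_matrix_mult_def Finite_Cartesian_Product.vec_eq_iff left_diff_distrib
      sum_subtractf)

lemma matpow_sums_matrix_inv:
  fixes X :: "real^'n::finite^'n"
  assumes "spectral_radius X < 1"
  shows "invertible (mat 1 - X)"
    and "(\<lambda>t. matpow X t $ i $ j) sums matrix_inv (mat 1 - X) $ i $ j"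
proof -
  obtain c q where bound: "\<And>k i j. \<bar>matpow X k $ i $ j\<bar> \<le> c * q ^ k" and q: "0 < q" "q < 1"
    by (rule matpow_geometric_bound[OF assms]) (rule that)
  have "summable (\<lambda>t. c * q ^ t)"
    by (intro summable_mult summable_geometric) (use q in simp)
  then have summable: "summable (\<lambda>t. matpow X t $ i $ j)" for i j
    by (rule summable_comparison_test') (use bound in simp)
  define M where "M = (\<chi> i j. \<Sum>t. matpow X t $ i $ j)"
  have sums: "(\<lambda>t. matpow X t $ i $ j) sums M $ i $ j" for i j
    using summable by (simp add: M_def summable_sums)
  have "(mat 1 - X) ** M = mat 1"
  proof (subst Finite_Cartesian_Product.vec_eq_iff, intro allI,
         subst Finite_Cartesian_Product.vec_eq_iff, intro allI)
    fix i j
    have "(\<lambda>t. ((mat 1 - X) ** matpow X t) $ i $ j) sums ((mat 1 - X) ** M) $ i $ j"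
      unfolding matrix_matrix_mult_def by (simp, intro sums_sum sums_mult sums)
    moreover have "(\<lambda>t. ((mat 1 - X) ** matpow X t) $ i $ j) sums (mat 1 :: real^'n^'n) $ i $ j"
      using telescope_sums'[OF summable_LIMSEQ_zero[OF summable[of i j]]]
      by (simp add: matrix_diff_rdistrib matpow_Suc)
    ultimately show "((mat 1 - X) ** M) $ i $ j = (mat 1 :: real^'n^'n) $ i $ j"
      by (rule sums_unique2)
  qed
  then show "invertible (mat 1 - X)"
    using invertible_def matrix_left_right_inverse by blast
  have "matrix_inv (mat 1 - X) = M"
    by (rule matrix_inv_unique) fact
  with sums show "(\<lambda>t. matpow X t $ i $ j) sums matrix_inv (mat 1 - X) $ i $ j"
    by simp
qed

lemma eta_eq_matrix_inv:
  assumes "spectral_radius (\<gamma> *\<^sub>R A) < 1"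
  shows "eta \<gamma> A x u = matrix_inv (mat 1 - \<gamma> *\<^sub>R A) $ u $ x"
  using matpow_sums_matrix_inv(2)[OF assms, of u x] by (simp add: eta_def matpow_scaleR sums_iff)

lemma differentiable_det:
  fixes F :: "'p::real_normed_vector \<Rightarrow> real^'n::finite^'n"
  assumes "\<And>i j. (\<lambda>th. F th $ i $ j) differentiable (at \<theta>)"
  shows "(\<lambda>th. det (F th)) differentiable (at \<theta>)"
proof -
  have "(\<lambda>th. \<Prod>i\<in>UNIV. F th $ i $ p i) differentiable (at \<theta>)" for p
    unfolding differentiable_def
    by (rule exI, rule has_derivative_prod[where f' = "\<lambda>i. frechet_derivative (\<lambda>th. F th $ i $ p i) (at \<theta>)"])
      (use assms frechet_derivative_works in blast)
  then show ?thesis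
    unfolding Determinants.det_def
    by (intro differentiable_sum differentiable_mult differentiable_const) (auto simp: finite_permutations)
qed

lemma differentiable_matrix_inv_mult:
  fixes M :: "'p::real_normed_vector \<Rightarrow> real^'n::finite^'n" and b :: "'p \<Rightarrow> real^'n"
  assumes inv: "\<And>th. invertible (M th)"
    and M: "\<And>i j. (\<lambda>th. M th $ i $ j) differentiable (at \<theta>)"
    and b: "\<And>i. (\<lambda>th. b th $ i) differentiable (at \<theta>)"
  shows "(\<lambda>th. (matrix_inv (M th) *v b th) $ k) differentiable (at \<theta>)"
proof -
  define F where "F th = (\<chi> i j. if j = k then b th $ i else M th $ i $ j)" for th
  have det: "det (M th) \<noteq> 0" for th
    using inv invertible_det_nz by blast
  have "M th *v (matrix_inv (M th) *v b th) = b th" for th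
    by (simp add: matrix_vector_mul_assoc matrix_inv_right[OF inv])
  then have "(\<lambda>th. (matrix_inv (M th) *v b th) $ k) = (\<lambda>th. det (F th) / det (M th))"
    unfolding cramer[OF det] F_def by simp
  moreover have "(\<lambda>th. F th $ i $ j) differentiable (at \<theta>)" for i j
    using M b by (cases "j = k") (simp_all add: F_def)
  then have "(\<lambda>th. det (F th) / det (M th)) differentiable (at \<theta>)"
    by (intro differentiable_divide differentiable_det M det)
  ultimately show ?thesis
    by simp
qed

lemma has_derivative_matrix_inv_mult:
  fixes M :: "'p::real_normed_vector \<Rightarrow> real^'n::finite^'n" and b :: "'p \<Rightarrow> real^'n"
  assumes inv: "\<And>th. invertible (M th)"
    and M': "\<And>i j. ((\<lambda>th. M th $ i $ j) has_derivative M' i j) (at \<theta>)"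
    and b': "\<And>i. ((\<lambda>th. b th $ i) has_derivative b' i) (at \<theta>)"
  shows "((\<lambda>th. (matrix_inv (M th) *v b th) $ k) has_derivative
           (\<lambda>h. (matrix_inv (M \<theta>) *v
                   (\<chi> i. b' i h - (\<Sum>j\<in>UNIV. M' i j h * (matrix_inv (M \<theta>) *v b \<theta>) $ j))) $ k))
         (at \<theta>)"
proof -
  define x where "x th = matrix_inv (M th) *v b th" for th
  have Mx: "M th *v x th = b th" for th
    by (simp add: x_def matrix_vector_mul_assoc matrix_inv_right[OF inv])
  define D where "D j = frechet_derivative (\<lambda>th. x th $ j) (at \<theta>)" for j
  have x': "((\<lambda>th. x th $ j) has_derivative D j) (at \<theta>)" for j
    unfolding D_def x_def frechet_derivative_works[symmetric]
    using inv M' b' by (blast intro: differentiable_matrix_inv_mult differentiableI)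
  have b'_eq: "b' i h = (\<Sum>j\<in>UNIV. M \<theta> $ i $ j * D j h + M' i j h * x \<theta> $ j)" for i h
  proof -
    have "((\<lambda>th. (M th *v x th) $ i) has_derivative
            (\<lambda>h. \<Sum>j\<in>UNIV. M \<theta> $ i $ j * D j h + M' i j h * x \<theta> $ j)) (at \<theta>)"
      unfolding matrix_vector_mult_def vec_lambda_beta by (intro has_derivative_sum has_derivative_mult M' x')
    then show ?thesis
      using has_derivative_unique[OF b'] by (simp add: Mx)
  qed
  have "M \<theta> *v (\<chi> j. D j h) = (\<chi> i. b' i h - (\<Sum>j\<in>UNIV. M' i j h * x \<theta> $ j))" for h
    by (simp add: b'_eq matrix_vector_mult_def Finite_Cartesian_Product.vec_eq_iff sum.distrib)
  then have "(\<chi> j. D j h) = matrix_inv (M \<theta>) *v (\<chi> i. b' i h - (\<Sum>j\<in>UNIV. M' i j h * x \<theta> $ j))" for h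
    by (metis matrix_inv_left[OF inv] matrix_vector_mul_assoc matrix_vector_mul_lid)
  then have "D k = (\<lambda>h. (matrix_inv (M \<theta>) *v (\<chi> i. b' i h - (\<Sum>j\<in>UNIV. M' i j h * x \<theta> $ j))) $ k)"
    by (metis vec_lambda_beta)
  with x'[of k] show ?thesis
    by (simp add: x_def)
qed

lemma has_derivative_resolvent_mult:
  fixes A :: "'p::real_normed_vector \<Rightarrow> real^'n::finite^'n" and b :: "'p \<Rightarrow> real^'n"
  assumes inv: "\<And>th. invertible (mat 1 - \<gamma> *\<^sub>R A th)"
    and A': "\<And>i j. ((\<lambda>th. A th $ i $ j) has_derivative A' i j) (at \<theta>)"
    and b': "\<And>i. ((\<lambda>th. b th $ i) has_derivative b' i) (at \<theta>)"
  shows "((\<lambda>th. (matrix_inv (mat 1 - \<gamma> *\<^sub>R A th) *v b th) $ k) has_derivative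
           (\<lambda>h. \<Sum>x\<in>UNIV. matrix_inv (mat 1 - \<gamma> *\<^sub>R A \<theta>) $ k $ x *
                  (b' x h + \<gamma> * (\<Sum>y\<in>UNIV. A' x y h *
                     (matrix_inv (mat 1 - \<gamma> *\<^sub>R A \<theta>) *v b \<theta>) $ y)))) (at \<theta>)"
proof -
  have "((\<lambda>th. (mat 1 :: real^'n^'n) $ i $ j - \<gamma> * A th $ i $ j) has_derivative
          (\<lambda>h. 0 - \<gamma> * A' i j h)) (at \<theta>)" for i j
    by (intro has_derivative_diff has_derivative_const has_derivative_mult_right A')
  then have "((\<lambda>th. (mat 1 - \<gamma> *\<^sub>R A th) $ i $ j) has_derivative (\<lambda>h. - \<gamma> * A' i j h)) (at \<theta>)"
    for i j by simp
  from has_derivative_matrix_inv_mult[OF inv this b'] show ?thesis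
    by (simp add: matrix_vector_mult_def sum_negf sum_distrib_left mult_ac)
qed

lemma sum_rotate:
  "(\<Sum>z\<in>C. \<Sum>x\<in>A. \<Sum>y\<in>B. f x y z) = (\<Sum>x\<in>A. \<Sum>y\<in>B. \<Sum>z\<in>C. f x y z)"
  by (subst sum.swap) (rule sum.cong[OF refl], rule sum.swap)

lemma sum_mult_policy_expectation:
  fixes \<nu> :: "'s \<Rightarrow> real"
  shows "(\<Sum>y\<in>C. (\<Sum>s\<in>A. \<nu> s * (\<Sum>a\<in>B. d s a * g y s a)) * V y) =
     (\<Sum>s\<in>A. \<nu> s * (\<Sum>a\<in>B. d s a * (\<Sum>y\<in>C. g y s a * V y)))"
proof -
  have "(\<Sum>y\<in>C. (\<Sum>s\<in>A. \<nu> s * (\<Sum>a\<in>B. d s a * g y s a)) * V y) =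
      (\<Sum>y\<in>C. \<Sum>s\<in>A. \<Sum>a\<in>B. \<nu> s * d s a * g y s a * V y)"
    by (simp add: sum_distrib_left sum_distrib_right mult_ac)
  also have "\<dots> = (\<Sum>s\<in>A. \<Sum>a\<in>B. \<Sum>y\<in>C. \<nu> s * d s a * g y s a * V y)"
    by (rule sum_rotate)
  also have "\<dots> = (\<Sum>s\<in>A. \<nu> s * (\<Sum>a\<in>B. d s a * (\<Sum>y\<in>C. g y s a * V y)))"
    by (simp add: sum_distrib_left mult_ac)
  finally show ?thesis .
qed

lemma has_derivative_policy_expectation:
  fixes \<pi> :: "'p::real_normed_vector \<Rightarrow> 's::finite \<Rightarrow> 'a::finite \<Rightarrow> real" and \<nu> :: "'s \<Rightarrow> real"
  assumes "\<And>s a. ((\<lambda>th. \<pi> th s a) has_derivative d\<pi> s a) (at \<theta>)"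
  shows "((\<lambda>th. \<Sum>s\<in>UNIV. \<nu> s * (\<Sum>a\<in>UNIV. \<pi> th s a * g s a)) has_derivative
           (\<lambda>h. \<Sum>s\<in>UNIV. \<nu> s * (\<Sum>a\<in>UNIV. d\<pi> s a h * g s a))) (at \<theta>)"
  by (intro has_derivative_sum has_derivative_mult_right has_derivative_mult_left assms)

lemma PU_component:
  "PU Pnu P pol $ x $ y = (\<Sum>s\<in>UNIV. Pnu $ x $ s * (\<Sum>a\<in>UNIV. pol s a * P1 Pnu P y s a))"
proof -
  have "PU Pnu P pol $ x $ y =
      (\<Sum>s'\<in>UNIV. \<Sum>s\<in>UNIV. \<Sum>a\<in>UNIV. Pnu $ x $ s * pol s a * P s a s' * pinv Pnu $ s' $ y)"
    by (simp add: PU_def PS_def matrix_matrix_mult_def sum_distrib_left sum_distrib_right mult_ac)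
  also have "\<dots> = (\<Sum>s\<in>UNIV. \<Sum>a\<in>UNIV. \<Sum>s'\<in>UNIV. Pnu $ x $ s * pol s a * P s a s' * pinv Pnu $ s' $ y)"
    by (rule sum_rotate)
  also have "\<dots> = (\<Sum>s\<in>UNIV. Pnu $ x $ s * (\<Sum>a\<in>UNIV. pol s a * P1 Pnu P y s a))"
    by (simp add: P1_def sum_distrib_left mult_ac)
  finally show ?thesis .
qed

lemma has_derivative_PU_component:
  assumes "\<And>s a. ((\<lambda>th. \<pi> th s a) has_derivative d\<pi> s a) (at \<theta>)"
  shows "((\<lambda>th. PU Pnu P (\<pi> th) $ x $ y) has_derivative
           (\<lambda>h. \<Sum>s\<in>UNIV. Pnu $ x $ s * (\<Sum>a\<in>UNIV. d\<pi> s a h * P1 Pnu P y s a))) (at \<theta>)"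
  unfolding PU_component by (rule has_derivative_policy_expectation[OF assms])

lemma has_derivative_mult_RS_component:
  assumes "\<And>s a. ((\<lambda>th. \<pi> th s a) has_derivative d\<pi> s a) (at \<theta>)"
  shows "((\<lambda>th. (Pnu *v RS r (\<pi> th)) $ x) has_derivative
           (\<lambda>h. \<Sum>s\<in>UNIV. Pnu $ x $ s * (\<Sum>a\<in>UNIV. d\<pi> s a h * r s a))) (at \<theta>)"
  unfolding RS_def matrix_vector_mult_def vec_lambda_beta
  by (rule has_derivative_policy_expectation[OF assms])

lemma mult_frechet_derivative_ln:
  fixes f :: "'p::real_normed_vector \<Rightarrow> real"
  assumes "0 < f \<theta>" and "(f has_derivative f') (at \<theta>)"
  shows "f \<theta> * frechet_derivative (\<lambda>th. ln (f th)) (at \<theta>) h = f' h"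
proof -
  have "((\<lambda>th. ln (f th)) has_derivative (\<lambda>h. f' h * inverse (f \<theta>))) (at \<theta>)"
    using assms by (rule has_derivative_ln)
  then show ?thesis
    using assms(1) by (simp add: frechet_derivative_at[symmetric])
qed

theorem theorem4:
  fixes P :: "'s::finite \<Rightarrow> 'a::finite \<Rightarrow> 's \<Rightarrow> real"
    and r :: "'s \<Rightarrow> 'a \<Rightarrow> real"
    and \<gamma> :: real
    and Pnu :: "real^'s^'u::finite"
    and \<pi> :: "'p::euclidean_space \<Rightarrow> 's \<Rightarrow> 'a \<Rightarrow> real"
    and \<theta> :: 'p
    and u :: 'u
  assumes P_nonneg: "\<And>s a s'. P s a s' \<ge> 0"
    and P_sum: "\<And>s a. (\<Sum>s'\<in>UNIV. P s a s') = 1"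
    and gamma: "0 < \<gamma>" "\<gamma> < 1"
    and nu_nonneg: "\<And>x s. Pnu $ x $ s \<ge> 0"
    and nu_sum: "\<And>x. (\<Sum>s\<in>UNIV. Pnu $ x $ s) = 1"
    and full_rank: "rank Pnu = CARD('u)"
    and pi_pos: "\<And>th s a. \<pi> th s a > 0"
    and pi_sum: "\<And>th s. (\<Sum>a\<in>UNIV. \<pi> th s a) = 1"
    and pi_diff: "\<And>th s a. (\<lambda>th'. \<pi> th' s a) differentiable (at th)"
    and spec: "\<And>th. spectral_radius (\<gamma> *\<^sub>R PU Pnu P (\<pi> th)) < 1"
  shows "((\<lambda>th. VU \<gamma> Pnu P r (\<pi> th) $ u) has_derivative
           (\<lambda>h. \<Sum>x\<in>UNIV. eta \<gamma> (PU Pnu P (\<pi> \<theta>)) x u *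
                  (\<Sum>s\<in>UNIV. Pnu $ x $ s *
                    (\<Sum>a\<in>UNIV. \<pi> \<theta> s a *
                       frechet_derivative (\<lambda>th. ln (\<pi> th s a)) (at \<theta>) h *
                       (r s a + \<gamma> * (\<Sum>u'\<in>UNIV. P1 Pnu P u' s a * VU \<gamma> Pnu P r (\<pi> \<theta>) $ u'))))))
         (at \<theta>)"
proof -
  define d\<pi> where "d\<pi> s a = frechet_derivative (\<lambda>th. \<pi> th s a) (at \<theta>)" for s a
  have d\<pi>: "((\<lambda>th. \<pi> th s a) has_derivative d\<pi> s a) (at \<theta>)" for s a
    unfolding d\<pi>_def using pi_diff frechet_derivative_works by blast
  define V where "V = VU \<gamma> Pnu P r (\<pi> \<theta>)"
  have "((\<lambda>th. VU \<gamma> Pnu P r (\<pi> th) $ u) has_derivative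
          (\<lambda>h. \<Sum>x\<in>UNIV. eta \<gamma> (PU Pnu P (\<pi> \<theta>)) x u *
                 ((\<Sum>s\<in>UNIV. Pnu $ x $ s * (\<Sum>a\<in>UNIV. d\<pi> s a h * r s a)) +
                  \<gamma> * (\<Sum>y\<in>UNIV. (\<Sum>s\<in>UNIV. Pnu $ x $ s * (\<Sum>a\<in>UNIV. d\<pi> s a h * P1 Pnu P y s a)) *
                         V $ y)))) (at \<theta>)"
    unfolding V_def VU_def eta_eq_matrix_inv[OF spec]
    by (rule has_derivative_resolvent_mult[where A = "\<lambda>th. PU Pnu P (\<pi> th)"])
      (intro matpow_sums_matrix_inv(1) spec has_derivative_PU_component
        has_derivative_mult_RS_component d\<pi>)+
  then show ?thesis
    unfolding V_def[symmetric] sum_mult_policy_expectation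
    by (simp add: mult_frechet_derivative_ln[OF pi_pos d\<pi>] sum_distrib_left distrib_left
        sum.distrib mult_ac)
qed

end
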